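(* For any time warps $f,g$: (a) $\mathrm{last}(fg)=\omega$ if and only if ($\mathrm{last}(f)=\omega$ and $\mathrm{last}(g)=\omega$); (b) $\mathrm{last}(f)=\omega\iff\mathrm{last}(f^{r})=\omega\iff\mathrm{last}(f^{\ell})=\omega$.
   Context: Let $\overline{\omega}=\omega\cup\{\omega\}$ be the natural numbers with a top element $\omega$ adjoined, with its natural total order. A time warp is a monotone map $f\colon\overline{\omega}\to\overline{\omega}$ with $f(0)=0$ and $f(\omega)=\bigvee\{f(n)\mid n\in\omega\}$. The set $W$ of time warps is ordered pointwise, $fg:=f\circ g$, $\mathrm{id}$ is the identity. The residuals $\backslash,/$ are the binary operations on $W$ with $f\le h/g\iff fg\le h\iff g\le f\backslash h$ for all $f,g,h$. Define $f^{\ell}:=\mathrm{id}/f$ and $f^{r}:=f\backslash\mathrm{id}$. For a time warp $f$, $\mathrm{last}(f):=\bigwedge\{p\in\overline{\omega}\mid f(p)=f(\omega)\}$. *)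

theory Defs
  imports Main "HOL-Library.Extended_Nat"
begin

text \<open>The extended naturals \<open>\<omega>\<close>-bar are modelled by \<open>enat\<close>, with \<open>\<infinity>\<close> playing the role of \<open>\<omega>\<close>.\<close>

definition time_warp :: "(enat \<Rightarrow> enat) \<Rightarrow> bool" where
  "time_warp f \<longleftrightarrow> mono f \<and> f 0 = 0 \<and> f \<infinity> = (SUP n::nat. f (enat n))"

definition rres :: "(enat \<Rightarrow> enat) \<Rightarrow> (enat \<Rightarrow> enat) \<Rightarrow> (enat \<Rightarrow> enat)" (infixl "'/'/" 70) where
  "h // g = (THE r. time_warp r \<and> (\<forall>f. time_warp f \<longrightarrow> (f \<le> r \<longleftrightarrow> f \<circ> g \<le> h)))"

definition lres :: "(enat \<Rightarrow> enat) \<Rightarrow> (enat \<Rightarrow> enat) \<Rightarrow> (enat \<Rightarrow> enat)" (infixr "\<setminus>\<setminus>" 70) where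
  "f \<setminus>\<setminus> h = (THE r. time_warp r \<and> (\<forall>g. time_warp g \<longrightarrow> (g \<le> r \<longleftrightarrow> f \<circ> g \<le> h)))"

definition ladj :: "(enat \<Rightarrow> enat) \<Rightarrow> (enat \<Rightarrow> enat)" where
  "ladj f = id // f"

definition radj :: "(enat \<Rightarrow> enat) \<Rightarrow> (enat \<Rightarrow> enat)" where
  "radj f = f \<setminus>\<setminus> id"

definition tw_last :: "(enat \<Rightarrow> enat) \<Rightarrow> enat" where
  "tw_last f = Inf {p. f p = f \<infinity>}"

end

(* For a time warp f, last f = \<omega> says that f never attains its value f \<omega> at a finite
   argument; as f \<omega> is the supremum of the f n, this means that f is unbounded (f \<omega> = \<omega>)
   and finite-valued (f n < \<omega> for all n).  Both properties are transferred along
   composition in each direction.  The residuals are computed pointwise,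
   f\<^sup>r n = max {q. f q \<le> n} and f\<^sup>\<ell> n = min {q. n \<le> f q}, and through these Galois
   formulas f\<^sup>r and f\<^sup>\<ell> are finite-valued iff f is unbounded, and unbounded iff f is
   finite-valued. *)

theory Submission
  imports Defs
begin

lemma time_warpD:
  assumes "time_warp f"
  shows "mono f" and "f 0 = 0" and "f \<infinity> = (SUP n. f (enat n))"
  using assms by (simp_all add: time_warp_def)

lemma enat_Sup_in:
  fixes S :: "enat set"
  assumes "S \<noteq> {}" and "Sup S \<noteq> \<infinity>"
  shows "Sup S \<in> S"
  using assms by (auto simp: Sup_enat_def split: if_splits)

lemma enat_Inf_in:
  fixes S :: "enat set"
  assumes "S \<noteq> {}"
  shows "Inf S \<in> S"
  using assms by (auto simp: Inf_enat_def intro: LeastI)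

lemma SUP_enat_eq_infinity_iff:
  "(SUP n. h n) = (\<infinity>::enat) \<longleftrightarrow> (\<forall>m. \<exists>n. enat m < h n)"
  unfolding top_enat_def[symmetric] SUP_eq_top_iff
  by (auto simp: top_enat_def elim!: less_infinityE)

lemma time_warp_Sup:
  assumes tw: "time_warp f" and "S \<noteq> {}"
  shows "f (Sup S) = Sup (f ` S)"
proof (rule antisym)
  have mono: "mono f" using tw by (rule time_warpD)
  show "Sup (f ` S) \<le> f (Sup S)"
    by (rule Sup_least) (auto intro: monoD[OF mono] Sup_upper)
  show "f (Sup S) \<le> Sup (f ` S)"
  proof (cases "Sup S = \<infinity>")
    case False
    then show ?thesis using enat_Sup_in[OF \<open>S \<noteq> {}\<close>] by (simp add: Sup_upper)
  next
    case True
    have "f (enat m) \<le> Sup (f ` S)" for m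
    proof -
      obtain s where "s \<in> S" "enat m < s"
        using True less_Sup_iff[of "enat m" S] by auto
      then show ?thesis by (meson SUP_upper2 less_imp_le monoD[OF mono])
    qed
    then show ?thesis using True time_warpD(3)[OF tw] by (simp add: SUP_least)
  qed
qed

lemma tw_last_eq_infinity_iff: "tw_last f = \<infinity> \<longleftrightarrow> (\<forall>n. f (enat n) \<noteq> f \<infinity>)"
proof -
  have "tw_last f = \<infinity> \<longleftrightarrow> (\<forall>p. f p = f \<infinity> \<longrightarrow> p = \<infinity>)"
    unfolding tw_last_def top_enat_def[symmetric] by (auto simp: Inf_top_conv)
  also have "\<dots> \<longleftrightarrow> (\<forall>n. f (enat n) \<noteq> f \<infinity>)"
    by (metis enat.exhaust enat.distinct(1))
  finally show ?thesis .
qed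

lemma time_warp_last_eq_infinity_iff:
  assumes tw: "time_warp f"
  shows "tw_last f = \<infinity> \<longleftrightarrow> f \<infinity> = \<infinity> \<and> (\<forall>n. f (enat n) \<noteq> \<infinity>)"
proof
  assume "tw_last f = \<infinity>"
  then have below_top: "f (enat n) \<noteq> f \<infinity>" for n
    by (simp add: tw_last_eq_infinity_iff)
  have "f \<infinity> = \<infinity>"
  proof (rule ccontr)
    assume "f \<infinity> \<noteq> \<infinity>"
    then have "f \<infinity> \<in> range (\<lambda>n. f (enat n))"
      using enat_Sup_in[of "range (\<lambda>n. f (enat n))"] time_warpD(3)[OF tw] by simp
    then obtain n where "f (enat n) = f \<infinity>" by auto
    with below_top show False by blast
  qed
  with below_top show "f \<infinity> = \<infinity> \<and> (\<forall>n. f (enat n) \<noteq> \<infinity>)" by simp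
next
  assume "f \<infinity> = \<infinity> \<and> (\<forall>n. f (enat n) \<noteq> \<infinity>)"
  then show "tw_last f = \<infinity>" by (simp add: tw_last_eq_infinity_iff)
qed

lemma tw_last_comp_iff:
  assumes tf: "time_warp f" and tg: "time_warp g"
  shows "tw_last (f \<circ> g) = \<infinity> \<longleftrightarrow> tw_last f = \<infinity> \<and> tw_last g = \<infinity>"
proof
  assume "tw_last (f \<circ> g) = \<infinity>"
  then have fg_below: "f (g (enat n)) \<noteq> f (g \<infinity>)" for n
    by (simp add: tw_last_eq_infinity_iff)
  then have last_g: "tw_last g = \<infinity>"
    by (metis tw_last_eq_infinity_iff)
  then have g_top: "g \<infinity> = \<infinity>"
    using time_warp_last_eq_infinity_iff[OF tg] by simp
  have "f (enat m) \<noteq> f \<infinity>" for m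
  proof -
    obtain n where "enat m < g (enat n)"
      using g_top time_warpD(3)[OF tg] SUP_enat_eq_infinity_iff by metis
    then have "f (enat m) \<le> f (g (enat n))"
      by (simp add: monoD[OF time_warpD(1)[OF tf]])
    moreover have "f (g (enat n)) < f \<infinity>"
      using fg_below[of n] g_top monoD[OF time_warpD(1)[OF tf]] by (simp add: order_less_le)
    ultimately show ?thesis by simp
  qed
  with last_g show "tw_last f = \<infinity> \<and> tw_last g = \<infinity>"
    by (simp add: tw_last_eq_infinity_iff)
next
  assume "tw_last f = \<infinity> \<and> tw_last g = \<infinity>"
  then have f: "f \<infinity> = \<infinity> \<and> (\<forall>k. f (enat k) \<noteq> \<infinity>)"
    and g: "g \<infinity> = \<infinity> \<and> (\<forall>n. g (enat n) \<noteq> \<infinity>)"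
    using time_warp_last_eq_infinity_iff[OF tf] time_warp_last_eq_infinity_iff[OF tg] by auto
  have "f (g (enat n)) \<noteq> f (g \<infinity>)" for n
    using f g by (metis enat.exhaust)
  then show "tw_last (f \<circ> g) = \<infinity>"
    by (simp add: tw_last_eq_infinity_iff)
qed

lemma lres_eqI:
  assumes "time_warp r" and "\<And>g. time_warp g \<Longrightarrow> g \<le> r \<longleftrightarrow> f \<circ> g \<le> h"
  shows "f \<setminus>\<setminus> h = r"
  unfolding lres_def
  by (rule the_equality) (use assms in \<open>blast intro: antisym\<close>)+

lemma rres_eqI:
  assumes "time_warp r" and "\<And>f. time_warp f \<Longrightarrow> f \<le> r \<longleftrightarrow> f \<circ> g \<le> h"
  shows "rres h g = r"
  unfolding rres_def
  by (rule the_equality) (use assms in \<open>blast intro: antisym\<close>)+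

definition warp_of :: "(nat \<Rightarrow> enat) \<Rightarrow> enat \<Rightarrow> enat" where
  "warp_of \<phi> p = (case p of enat n \<Rightarrow> \<phi> n | \<infinity> \<Rightarrow> (SUP n. \<phi> n))"

lemma warp_of_simps [simp]:
  "warp_of \<phi> (enat n) = \<phi> n"
  "warp_of \<phi> \<infinity> = (SUP n. \<phi> n)"
  by (simp_all add: warp_of_def)

lemma time_warp_warp_of:
  assumes "mono \<phi>" and "\<phi> 0 = 0"
  shows "time_warp (warp_of \<phi>)"
  unfolding time_warp_def
proof (intro conjI)
  show "mono (warp_of \<phi>)"
  proof
    fix x y :: enat
    assume "x \<le> y"
    then show "warp_of \<phi> x \<le> warp_of \<phi> y"
      by (cases x; cases y) (auto intro: monoD[OF assms(1)] SUP_upper2)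
  qed
  show "warp_of \<phi> 0 = 0"
    using assms(2) by (simp add: zero_enat_def)
qed simp

lemma tw_last_warp_of_eq_infinity_iff:
  assumes "mono \<phi>" and "\<phi> 0 = 0"
  shows "tw_last (warp_of \<phi>) = \<infinity> \<longleftrightarrow> (SUP n. \<phi> n) = \<infinity> \<and> (\<forall>n. \<phi> n \<noteq> \<infinity>)"
  by (simp add: time_warp_last_eq_infinity_iff[OF time_warp_warp_of[OF assms]])

lemma le_warp_of_iff:
  assumes "time_warp g"
  shows "g \<le> warp_of \<phi> \<longleftrightarrow> (\<forall>n. g (enat n) \<le> \<phi> n)"
proof
  assume "g \<le> warp_of \<phi>"
  then show "\<forall>n. g (enat n) \<le> \<phi> n"
    by (metis warp_of_simps(1) le_funD)
next
  assume le: "\<forall>n. g (enat n) \<le> \<phi> n"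
  then have "g \<infinity> \<le> (SUP n. \<phi> n)"
    using time_warpD(3)[OF assms] by (simp add: SUP_mono')
  with le show "g \<le> warp_of \<phi>"
    by (simp add: le_fun_def) (metis enat.exhaust warp_of_simps)
qed

text \<open>The supremum at \<open>n = 0\<close> may be positive, but the residual is forced to vanish there
  like every time warp.\<close>

definition radj_seq :: "(enat \<Rightarrow> enat) \<Rightarrow> nat \<Rightarrow> enat" where
  "radj_seq f n = (if n = 0 then 0 else Sup {q. f q \<le> enat n})"

definition ladj_seq :: "(enat \<Rightarrow> enat) \<Rightarrow> nat \<Rightarrow> enat" where
  "ladj_seq f n = Inf {q. enat n \<le> f q}"

lemma mono_radj_seq: "mono (radj_seq f)"
proof
  fix a b :: nat
  assume "a \<le> b"
  then have "{q. f q \<le> enat a} \<subseteq> {q. f q \<le> enat b}"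
    by (auto intro: order_trans)
  with \<open>a \<le> b\<close> show "radj_seq f a \<le> radj_seq f b"
    unfolding radj_seq_def by (simp add: Sup_subset_mono)
qed

lemma mono_ladj_seq: "mono (ladj_seq f)"
proof
  fix a b :: nat
  assume "a \<le> b"
  then have "{q. enat b \<le> f q} \<subseteq> {q. enat a \<le> f q}"
    by (auto intro: order_trans[of "enat a" "enat b"])
  then show "ladj_seq f a \<le> ladj_seq f b"
    unfolding ladj_seq_def by (rule Inf_superset_mono)
qed

lemma radj_seq_0 [simp]: "radj_seq f 0 = 0"
  by (simp add: radj_seq_def)

lemma ladj_seq_0 [simp]: "ladj_seq f 0 = 0"
  by (simp add: ladj_seq_def zero_enat_def[symmetric] bot_enat_def)

lemma le_radj_seq_iff:
  assumes tw: "time_warp f" and "n \<noteq> 0"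
  shows "y \<le> radj_seq f n \<longleftrightarrow> f y \<le> enat n"
proof -
  let ?S = "{q. f q \<le> enat n}"
  have "0 \<in> ?S" using time_warpD(2)[OF tw] by simp
  then have "f (Sup ?S) = Sup (f ` ?S)"
    by (intro time_warp_Sup[OF tw]) blast
  also have "\<dots> \<le> enat n" by (auto intro: Sup_least)
  finally have "f (Sup ?S) \<le> enat n" .
  then show ?thesis
    using \<open>n \<noteq> 0\<close> monoD[OF time_warpD(1)[OF tw]]
    by (auto simp: radj_seq_def intro: Sup_upper order_trans)
qed

lemma ladj_seq_le_iff:
  assumes "mono f"
  shows "ladj_seq f n \<le> enat k \<longleftrightarrow> enat n \<le> f (enat k)"
proof
  assume le: "ladj_seq f n \<le> enat k"
  then have "{q. enat n \<le> f q} \<noteq> {}"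
    by (intro notI) (simp add: ladj_seq_def top_enat_def)
  then have "Inf {q. enat n \<le> f q} \<in> {q. enat n \<le> f q}"
    by (rule enat_Inf_in)
  then have "enat n \<le> f (ladj_seq f n)"
    by (simp add: ladj_seq_def)
  also have "\<dots> \<le> f (enat k)"
    using le by (rule monoD[OF assms])
  finally show "enat n \<le> f (enat k)" .
next
  assume "enat n \<le> f (enat k)"
  then show "ladj_seq f n \<le> enat k"
    unfolding ladj_seq_def by (simp add: Inf_lower)
qed

lemma radj_eq_warp_of:
  assumes tw: "time_warp f"
  shows "radj f = warp_of (radj_seq f)"
  unfolding radj_def
proof (rule lres_eqI)
  show "time_warp (warp_of (radj_seq f))"
    by (rule time_warp_warp_of[OF mono_radj_seq radj_seq_0])
next
  fix g
  assume tg: "time_warp g"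
  have "g (enat n) \<le> radj_seq f n \<longleftrightarrow> f (g (enat n)) \<le> enat n" for n
  proof (cases "n = 0")
    case True
    then show ?thesis
      using time_warpD(2)[OF tw] time_warpD(2)[OF tg] by (simp add: radj_seq_def zero_enat_def)
  next
    case False
    then show ?thesis by (rule le_radj_seq_iff[OF tw])
  qed
  moreover have "f \<circ> g \<le> id \<longleftrightarrow> (\<forall>n. f (g (enat n)) \<le> enat n)"
    by (auto simp: le_fun_def) (metis enat.exhaust enat_ord_code(3))
  ultimately show "g \<le> warp_of (radj_seq f) \<longleftrightarrow> f \<circ> g \<le> id"
    by (simp add: le_warp_of_iff[OF tg])
qed

lemma ladj_eq_warp_of:
  assumes tw: "time_warp f"
  shows "ladj f = warp_of (ladj_seq f)"
  unfolding ladj_def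
proof (rule rres_eqI)
  show "time_warp (warp_of (ladj_seq f))"
    by (rule time_warp_warp_of[OF mono_ladj_seq ladj_seq_0])
next
  fix r
  assume tr: "time_warp r"
  show "r \<le> warp_of (ladj_seq f) \<longleftrightarrow> r \<circ> f \<le> id"
  proof
    assume "r \<le> warp_of (ladj_seq f)"
    then have "r (enat n) \<le> enat k" if "enat n \<le> f (enat k)" for n k
      using that ladj_seq_le_iff[OF time_warpD(1)[OF tw]]
      by (metis le_warp_of_iff[OF tr] order_trans)
    then have "r (f (enat k)) \<le> enat k" for k
      using time_warpD(3)[OF tr] by (cases "f (enat k)") (auto intro: SUP_least)
    then show "r \<circ> f \<le> id"
      by (auto simp: le_fun_def) (metis enat.exhaust enat_ord_code(3))
  next
    assume "r \<circ> f \<le> id"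
    then have "r (f q) \<le> q" for q
      by (simp add: le_fun_def)
    then show "r \<le> warp_of (ladj_seq f)"
      unfolding le_warp_of_iff[OF tr] ladj_seq_def
      by (auto intro!: Inf_greatest) (meson monoD[OF time_warpD(1)[OF tr]] order_trans)
  qed
qed

lemma tw_last_radj_iff:
  assumes tw: "time_warp f"
  shows "tw_last (radj f) = \<infinity> \<longleftrightarrow> tw_last f = \<infinity>"
proof -
  have finite_values: "(\<forall>n. radj_seq f n \<noteq> \<infinity>) \<longleftrightarrow> f \<infinity> = \<infinity>"
  proof
    assume fin: "\<forall>n. radj_seq f n \<noteq> \<infinity>"
    show "f \<infinity> = \<infinity>"
    proof (cases "f \<infinity>")
      case (enat k)
      then have "\<infinity> \<le> radj_seq f (Suc k)"
        using le_radj_seq_iff[OF tw, of "Suc k" \<infinity>] by simp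
      with fin[rule_format, of "Suc k"] show ?thesis by simp
    qed
  next
    assume f_top: "f \<infinity> = \<infinity>"
    show "\<forall>n. radj_seq f n \<noteq> \<infinity>"
    proof
      fix n
      show "radj_seq f n \<noteq> \<infinity>"
        using f_top le_radj_seq_iff[OF tw, of n \<infinity>] by (cases "n = 0") auto
    qed
  qed
  have unbounded: "(SUP n. radj_seq f n) = \<infinity> \<longleftrightarrow> (\<forall>m. f (enat m) \<noteq> \<infinity>)"
    unfolding SUP_enat_eq_infinity_iff
  proof (intro iffI allI notI)
    fix m
    assume "\<forall>m. \<exists>n. enat m < radj_seq f n" and "f (enat m) = \<infinity>"
    then obtain n where "enat m < radj_seq f n" by blast
    moreover from this have "n \<noteq> 0" by (intro notI) simp
    ultimately show False
      using le_radj_seq_iff[OF tw, of n "enat m"] \<open>f (enat m) = \<infinity>\<close> by simp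
  next
    fix m
    assume "\<forall>m. f (enat m) \<noteq> \<infinity>"
    then obtain k where "f (enat (Suc m)) = enat k" by blast
    then have "enat (Suc m) \<le> radj_seq f (Suc k)"
      by (simp add: le_radj_seq_iff[OF tw])
    then show "\<exists>n. enat m < radj_seq f n"
      by (auto simp: Suc_ile_eq)
  qed
  show ?thesis
    unfolding radj_eq_warp_of[OF tw] tw_last_warp_of_eq_infinity_iff[OF mono_radj_seq radj_seq_0]
      time_warp_last_eq_infinity_iff[OF tw]
    using finite_values unbounded by blast
qed

lemma tw_last_ladj_iff:
  assumes tw: "time_warp f"
  shows "tw_last (ladj f) = \<infinity> \<longleftrightarrow> tw_last f = \<infinity>"
proof -
  note ladj_le = ladj_seq_le_iff[OF time_warpD(1)[OF tw]]
  have "ladj_seq f n \<noteq> \<infinity> \<longleftrightarrow> (\<exists>k. enat n \<le> f (enat k))" for n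
    unfolding ladj_le[symmetric] by (cases "ladj_seq f n") auto
  then have finite_values: "(\<forall>n. ladj_seq f n \<noteq> \<infinity>) \<longleftrightarrow> f \<infinity> = \<infinity>"
    unfolding time_warpD(3)[OF tw] SUP_enat_eq_infinity_iff
    by (metis Suc_ile_eq less_imp_le)
  have "(\<exists>n. enat m < ladj_seq f n) \<longleftrightarrow> f (enat m) \<noteq> \<infinity>" for m
  proof -
    have "enat m < ladj_seq f n \<longleftrightarrow> f (enat m) < enat n" for n
      using ladj_le[of n m] by (simp add: not_le[symmetric])
    moreover have "(\<exists>n. f (enat m) < enat n) \<longleftrightarrow> f (enat m) \<noteq> \<infinity>"
      by (cases "f (enat m)") (auto intro: gt_ex)
    ultimately show ?thesis by simp
  qed
  then have unbounded: "(SUP n. ladj_seq f n) = \<infinity> \<longleftrightarrow> (\<forall>m. f (enat m) \<noteq> \<infinity>)"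
    by (simp add: SUP_enat_eq_infinity_iff)
  show ?thesis
    unfolding ladj_eq_warp_of[OF tw] tw_last_warp_of_eq_infinity_iff[OF mono_ladj_seq ladj_seq_0]
      time_warp_last_eq_infinity_iff[OF tw]
    using finite_values unbounded by blast
qed

theorem lemma2p11:
  assumes "time_warp f" and "time_warp g"
  shows "(tw_last (f \<circ> g) = \<infinity> \<longleftrightarrow> tw_last f = \<infinity> \<and> tw_last g = \<infinity>)
    \<and> (tw_last f = \<infinity> \<longleftrightarrow> tw_last (radj f) = \<infinity>)
    \<and> (tw_last (radj f) = \<infinity> \<longleftrightarrow> tw_last (ladj f) = \<infinity>)"
  using tw_last_comp_iff[OF assms] tw_last_radj_iff[OF assms(1)] tw_last_ladj_iff[OF assms(1)]
  by simp

end
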